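(* Every graph $G=(V,E)$ on $n\ge2$ vertices can be decomposed into an edge-disjoint union of subgraphs $G_1\uplus G_2\uplus\cdots\uplus G_\ell$ such that (a) each vertex appears in at most $O(\log n)$ of the subgraphs, and (b) each subgraph $G_i$ is $2$-uniformly-dense.
   Context: A graph $H=(U,F)$ with $n_H=|U|$ vertices and $m_H=|F|$ edges is $\alpha$-uniformly-dense if (i) the minimum degree of $H$ is at least $1/\alpha$ times its average degree $2m_H/n_H$, and (ii) for every nonempty $S\subseteq U$, the average degree $2|F(S,S)|/|S|$ of the subgraph induced by $S$ is at most $\alpha$ times $2m_H/n_H$. Here $F(S,S)$ is the set of edges with both endpoints in $S$. *)

theory Defs
  imports Complex_Main
begin

definition simple_graph :: "'a set \<Rightarrow> 'a set set \<Rightarrow> bool" where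
  "simple_graph V E \<longleftrightarrow> finite V \<and> (\<forall>e\<in>E. e \<subseteq> V \<and> card e = 2)"

definition degree :: "'a set set \<Rightarrow> 'a \<Rightarrow> nat" where
  "degree F v = card {e \<in> F. v \<in> e}"

definition avg_degree :: "'a set \<Rightarrow> 'a set set \<Rightarrow> real" where
  "avg_degree U F = 2 * real (card F) / real (card U)"

definition induced_edges :: "'a set set \<Rightarrow> 'a set \<Rightarrow> 'a set set" where
  "induced_edges F S = {e \<in> F. e \<subseteq> S}"

definition uniformly_dense :: "real \<Rightarrow> 'a set \<Rightarrow> 'a set set \<Rightarrow> bool" where
  "uniformly_dense \<alpha> U F \<longleftrightarrow>
     (\<forall>v\<in>U. real (degree F v) \<ge> avg_degree U F / \<alpha>) \<and>
     (\<forall>S. S \<subseteq> U \<and> S \<noteq> {} \<longrightarrow>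
        2 * real (card (induced_edges F S)) / real (card S) \<le> \<alpha> * avg_degree U F)"

end

theory Submission
  imports Defs
begin

text \<open>
  Orient the edges and, among the orientations of maximum out-degree at most \<open>M\<close>, take one
  minimising the sum of squared out-degrees. Reversing a directed path from \<open>a\<close> to \<open>y\<close> would
  lower this sum if \<open>a\<close> had two more out-edges than \<open>y\<close>; hence out-degrees drop by at most
  one along directed paths. Put \<open>k = \<lceil>M/2\<rceil>\<close>: let every vertex of out-degree at least \<open>k\<close>
  keep \<open>k\<close> of its out-edges and every other vertex keep all of them, and take the kept edges of
  the vertices reachable from the heavy ones along kept edges. In this subgraph every degree is
  at least \<open>k\<close> while every vertex set \<open>T\<close> spans at most \<open>k |T|\<close> edges, so it is 2-uniformly
  dense. Removing it leaves maximum out-degree \<open>\<lfloor>M/2\<rfloor>\<close>, so starting from \<open>M \<le> |E| \<le> n\<^sup>2/2\<close>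
  the edge set is exhausted after at most \<open>2 log\<^sub>2 n\<close> rounds.
\<close>

lemma relpow_Diff_singleton_or_reaches:
  fixes R :: "('a \<times> 'a) set"
  assumes "(a, z) \<in> R ^^ m"
  shows "(a, z) \<in> (R - {(x, y)}) ^^ m \<or> (\<exists>j\<le>m. (a, y) \<in> R ^^ j)"
  using assms
proof (induction m arbitrary: z)
  case 0
  then show ?case by simp
next
  case (Suc m)
  from Suc.prems obtain w where aw: "(a, w) \<in> R ^^ m" and wz: "(w, z) \<in> R"
    by (rule relpow_Suc_E)
  from Suc.IH[OF aw] show ?case
  proof
    assume aw': "(a, w) \<in> (R - {(x, y)}) ^^ m"
    show ?thesis
    proof (cases "(w, z) = (x, y)")
      case True
      have "(a, w) \<in> R ^^ m" using aw' relpowp_mono[to_set, of "R - {(x, y)}" R] by blast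
      with True wz have "(a, y) \<in> R ^^ Suc m" by auto
      then show ?thesis by blast
    next
      case False
      with aw' wz show ?thesis by auto
    qed
  next
    assume "\<exists>j\<le>m. (a, y) \<in> R ^^ j"
    then show ?thesis using le_SucI by blast
  qed
qed

lemma sum_remove_pair:
  assumes "finite A" "x \<in> A" "y \<in> A" "x \<noteq> y"
  shows "sum f A = f x + f y + sum f (A - {x, y})"
proof -
  have "sum f A = f x + sum f (A - {x})" using sum.remove[OF assms(1,2)] .
  also have "sum f (A - {x}) = f y + sum f (A - {x} - {y})"
    using assms by (intro sum.remove) auto
  also have "A - {x} - {y} = A - {x, y}" by auto
  finally show ?thesis by (simp add: add.assoc)
qed

lemma simple_graph_finite_edges: "simple_graph V E \<Longrightarrow> finite E"
  unfolding simple_graph_def by (meson Pow_iff finite_Pow_iff rev_finite_subset subsetI)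

lemma simple_graph_Diff: "simple_graph V E \<Longrightarrow> simple_graph V (E - P)"
  unfolding simple_graph_def by blast

lemma simple_graph_card_edges_le:
  assumes "simple_graph V E"
  shows "2 * card E \<le> card V ^ 2"
proof -
  from assms have "E \<subseteq> {B. B \<subseteq> V \<and> card B = 2}" "finite V" unfolding simple_graph_def by auto
  then have "card E \<le> card {B. B \<subseteq> V \<and> card B = 2}"
    by (intro card_mono) simp_all
  also have "\<dots> = card V choose 2" using \<open>finite V\<close> by (rule n_subsets)
  finally have "card E \<le> card V choose 2" .
  then have "2 * card E \<le> card V * (card V - 1)" by (simp add: choose_two)
  also have "\<dots> \<le> card V ^ 2" by (simp add: power2_eq_square)
  finally show ?thesis .
qed

lemma sum_degree_eq_twice_card:
  assumes "simple_graph V E"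
  shows "(\<Sum>v\<in>V. degree E v) = 2 * card E"
proof -
  have finE: "finite E" and finV: "finite V" and edges: "\<And>e. e \<in> E \<Longrightarrow> e \<subseteq> V \<and> card e = 2"
    using assms simple_graph_finite_edges unfolding simple_graph_def by auto
  have "(\<Sum>v\<in>V. degree E v) = (\<Sum>v\<in>V. \<Sum>e\<in>E. if v \<in> e then 1 else 0)"
    unfolding degree_def using finE by (simp add: sum.inter_filter[symmetric])
  also have "\<dots> = (\<Sum>e\<in>E. \<Sum>v\<in>V. if v \<in> e then 1 else 0)" by (rule sum.swap)
  also have "\<dots> = (\<Sum>e\<in>E. card {v\<in>V. v \<in> e})"
    using finV by (simp add: sum.inter_filter[symmetric])
  also have "\<dots> = (\<Sum>e\<in>E. 2)"
  proof (rule sum.cong)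
    fix e assume "e \<in> E"
    then have "{v\<in>V. v \<in> e} = e" "card e = 2" using edges by auto
    then show "card {v\<in>V. v \<in> e} = 2" by simp
  qed simp
  finally show ?thesis by simp
qed

lemma uniformly_dense_2I:
  assumes G: "simple_graph X P"
    and degree_ge: "\<And>v. v \<in> X \<Longrightarrow> k \<le> degree P v"
    and induced_le: "\<And>T. T \<subseteq> X \<Longrightarrow> card (induced_edges P T) \<le> k * card T"
  shows "uniformly_dense 2 X P"
proof -
  have finX: "finite X" using G unfolding simple_graph_def by simp
  have "induced_edges P X = P" using G unfolding simple_graph_def induced_edges_def by auto
  then have upper: "real (card P) \<le> real k * real (card X)"
    using induced_le[of X] by (simp flip: of_nat_mult)
  have "(\<Sum>v\<in>X. k) \<le> (\<Sum>v\<in>X. degree P v)" using degree_ge by (intro sum_mono) auto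
  then have lower: "real k * real (card X) \<le> 2 * real (card P)"
    using sum_degree_eq_twice_card[OF G] by (simp add: mult.commute flip: of_nat_mult)
  show ?thesis
    unfolding uniformly_dense_def avg_degree_def
  proof (intro conjI ballI allI impI)
    fix v assume "v \<in> X"
    then have "0 < card X" using finX card_gt_0_iff by auto
    then have "real (card P) / real (card X) \<le> real k" using upper by (simp add: divide_le_eq)
    also have "\<dots> \<le> real (degree P v)" using degree_ge[OF \<open>v \<in> X\<close>] by simp
    finally show "2 * real (card P) / real (card X) / 2 \<le> real (degree P v)" by simp
  next
    fix T assume T: "T \<subseteq> X \<and> T \<noteq> {}"
    then have cards: "0 < card T" "0 < card X"
      using finX finite_subset by (auto simp: card_gt_0_iff)
    have "real (card (induced_edges P T)) \<le> real k * real (card T)"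
      using induced_le[of T] T by (simp flip: of_nat_mult)
    then have "2 * real (card (induced_edges P T)) / real (card T) \<le> 2 * real k"
      using cards by (simp add: divide_le_eq)
    also have "\<dots> \<le> 2 * (2 * real (card P) / real (card X))"
      using lower cards by (simp add: le_divide_eq)
    finally show "2 * real (card (induced_edges P T)) / real (card T)
        \<le> 2 * (2 * real (card P) / real (card X))" .
  qed
qed

text \<open>An orientation \<open>g\<close> directs each edge \<open>e\<close> out of its tail \<open>g e\<close>.\<close>

definition orientation :: "'a set set \<Rightarrow> ('a set \<Rightarrow> 'a) \<Rightarrow> bool" where
  "orientation E g \<longleftrightarrow> (\<forall>e\<in>E. g e \<in> e)"

definition out_edges :: "'a set set \<Rightarrow> ('a set \<Rightarrow> 'a) \<Rightarrow> 'a \<Rightarrow> 'a set set" where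
  "out_edges E g v = {e \<in> E. g e = v}"

abbreviation out_degree :: "'a set set \<Rightarrow> ('a set \<Rightarrow> 'a) \<Rightarrow> 'a \<Rightarrow> nat" where
  "out_degree E g v \<equiv> card (out_edges E g v)"

definition arcs :: "'a set set \<Rightarrow> ('a set \<Rightarrow> 'a) \<Rightarrow> ('a \<times> 'a) set" where
  "arcs E g = {(u, w). {u, w} \<in> E \<and> g {u, w} = u \<and> u \<noteq> w}"

lemma out_edges_reverse_arc:
  assumes "(x, y) \<in> arcs E g"
  shows "out_edges E (g({x, y} := y)) x = out_edges E g x - {{x, y}}"
    and "out_edges E (g({x, y} := y)) y = insert {x, y} (out_edges E g y)"
    and "v \<noteq> x \<Longrightarrow> v \<noteq> y \<Longrightarrow> out_edges E (g({x, y} := y)) v = out_edges E g v"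
  using assms unfolding arcs_def out_edges_def by auto

lemma arcs_reverse_arc:
  assumes "(x, y) \<in> arcs E g"
  shows "arcs E g - {(x, y)} \<subseteq> arcs E (g({x, y} := y))"
proof
  fix p assume p: "p \<in> arcs E g - {(x, y)}"
  then obtain u w where p_eq: "p = (u, w)" and uw: "{u, w} \<in> E" "g {u, w} = u" "u \<noteq> w"
    by (auto simp: arcs_def)
  have "{u, w} \<noteq> {x, y}"
  proof
    assume "{u, w} = {x, y}"
    moreover have "g {x, y} = x" using assms by (simp add: arcs_def)
    ultimately show False using p p_eq uw by (auto simp: doubleton_eq_iff insert_commute)
  qed
  then show "p \<in> arcs E (g({x, y} := y))" using uw p_eq by (simp add: arcs_def)
qed

locale finite_simple_graph =
  fixes V :: "'a set" and E :: "'a set set"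
  assumes graph: "simple_graph V E"
begin

lemma finite_vertices: "finite V"
  using graph by (simp add: simple_graph_def)

lemma finite_edges: "finite E"
  using graph by (rule simple_graph_finite_edges)

lemma edge_subset: "e \<in> E \<Longrightarrow> e \<subseteq> V"
  using graph by (simp add: simple_graph_def)

lemma edge_doubleton:
  assumes "e \<in> E" "u \<in> e"
  obtains w where "e = {u, w}" "u \<noteq> w"
proof -
  have "card e = 2" using graph assms(1) by (simp add: simple_graph_def)
  then obtain a b where "e = {a, b}" "a \<noteq> b" by (auto simp: card_2_iff)
  with assms(2) that show ?thesis by (auto simp: insert_commute)
qed

lemma finite_out_edges: "finite (out_edges E g v)"
  using finite_edges by (simp add: out_edges_def)

lemma out_degree_outside:
  assumes "orientation E g" "v \<notin> V"
  shows "out_degree E g v = 0"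
proof -
  have "out_edges E g v = {}"
    using assms edge_subset by (fastforce simp: orientation_def out_edges_def)
  then show ?thesis by simp
qed

lemma out_degree_reverse_arc:
  assumes "(x, y) \<in> arcs E g"
  shows "out_degree E (g({x, y} := y)) x = out_degree E g x - 1"
    and "out_degree E (g({x, y} := y)) y = Suc (out_degree E g y)"
    and "v \<noteq> x \<Longrightarrow> v \<noteq> y \<Longrightarrow> out_degree E (g({x, y} := y)) v = out_degree E g v"
    and "0 < out_degree E g x"
proof -
  have xy: "{x, y} \<in> out_edges E g x" "{x, y} \<notin> out_edges E g y"
    using assms by (auto simp: arcs_def out_edges_def)
  show "out_degree E (g({x, y} := y)) x = out_degree E g x - 1"
    using xy by (simp add: out_edges_reverse_arc[OF assms] finite_out_edges)
  show "out_degree E (g({x, y} := y)) y = Suc (out_degree E g y)"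
    using xy by (simp add: out_edges_reverse_arc[OF assms] finite_out_edges)
  show "v \<noteq> x \<Longrightarrow> v \<noteq> y \<Longrightarrow> out_degree E (g({x, y} := y)) v = out_degree E g v"
    by (simp add: out_edges_reverse_arc[OF assms])
  show "0 < out_degree E g x"
    using xy finite_out_edges card_gt_0_iff by blast
qed

definition bounded_orientations :: "nat \<Rightarrow> ('a set \<Rightarrow> 'a) set" where
  "bounded_orientations M = {g. orientation E g \<and> (\<forall>v. out_degree E g v \<le> M)}"

definition energy :: "('a set \<Rightarrow> 'a) \<Rightarrow> nat" where
  "energy g = (\<Sum>v\<in>V. (out_degree E g v)\<^sup>2)"

definition optimal_orientation :: "nat \<Rightarrow> ('a set \<Rightarrow> 'a) \<Rightarrow> bool" where
  "optimal_orientation M g \<longleftrightarrow>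
     g \<in> bounded_orientations M \<and> (\<forall>g'\<in>bounded_orientations M. energy g \<le> energy g')"

lemma optimal_orientation_exists:
  assumes "g \<in> bounded_orientations M"
  obtains g' where "optimal_orientation M g'"
  using ex_has_least_nat[of "\<lambda>g. g \<in> bounded_orientations M" g energy] assms that
  unfolding optimal_orientation_def by blast

lemma energy_reverse_arc:
  assumes "(x, y) \<in> arcs E g"
  shows "energy (g({x, y} := y)) + 2 * out_degree E g x = energy g + 2 * out_degree E g y + 2"
proof -
  let ?g' = "g({x, y} := y)"
  have e: "{x, y} \<in> E" "x \<noteq> y" using assms by (auto simp: arcs_def)
  then have xy: "x \<in> V" "y \<in> V" using edge_subset by auto
  note deg = out_degree_reverse_arc[OF assms]
  have rest: "(\<Sum>v\<in>V-{x,y}. (out_degree E ?g' v)\<^sup>2) = (\<Sum>v\<in>V-{x,y}. (out_degree E g v)\<^sup>2)"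
    using deg(3) by (intro sum.cong) auto
  show ?thesis
    unfolding energy_def sum_remove_pair[OF finite_vertices xy e(2)] rest deg(1,2)
    using deg(4) by (cases "out_degree E g x") (auto simp: power2_eq_square)
qed

lemma reverse_arc_bounded:
  assumes "g \<in> bounded_orientations M" "(x, y) \<in> arcs E g"
    and "out_degree E g y < out_degree E g x"
  shows "g({x, y} := y) \<in> bounded_orientations M"
proof -
  have bound: "out_degree E g v \<le> M" for v
    using assms(1) by (simp add: bounded_orientations_def)
  have "out_degree E (g({x, y} := y)) v \<le> M" for v
    using bound[of v] bound[of x] assms(3) out_degree_reverse_arc[OF assms(2)]
    by (cases "v = x"; cases "v = y") auto
  moreover have "orientation E (g({x, y} := y))"
    using assms(1,2) by (auto simp: bounded_orientations_def orientation_def arcs_def)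
  ultimately show ?thesis by (simp add: bounded_orientations_def)
qed

lemma optimal_arc_out_degree:
  assumes "optimal_orientation M g" "(x, y) \<in> arcs E g"
  shows "out_degree E g x \<le> Suc (out_degree E g y)"
proof (rule ccontr)
  assume "\<not> ?thesis"
  then have "g({x, y} := y) \<in> bounded_orientations M"
    using assms reverse_arc_bounded by (simp add: optimal_orientation_def)
  then have "energy g \<le> energy (g({x, y} := y))"
    using assms(1) by (simp add: optimal_orientation_def)
  with energy_reverse_arc[OF assms(2)] \<open>\<not> ?thesis\<close> show False by linarith
qed

lemma optimal_reverse_tight_arc:
  assumes "optimal_orientation M g" "(x, y) \<in> arcs E g"
    and "out_degree E g x = Suc (out_degree E g y)"
  shows "optimal_orientation M (g({x, y} := y))"
proof -
  have "energy (g({x, y} := y)) = energy g"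
    using energy_reverse_arc[OF assms(2)] assms(3) by simp
  moreover have "g({x, y} := y) \<in> bounded_orientations M"
    using assms reverse_arc_bounded by (simp add: optimal_orientation_def)
  ultimately show ?thesis using assms(1) by (simp add: optimal_orientation_def)
qed

text \<open>
  If the last arc \<open>z \<rightarrow> y\<close> has \<open>z\<close> with one more out-edge than
  \<open>y\<close>, reversing it gives another optimal orientation in which \<open>z\<close> has the out-degree of \<open>y\<close>,
  and the path to \<open>z\<close> either survives the reversal or already passes through \<open>y\<close>.
\<close>

lemma optimal_path_out_degree:
  assumes "optimal_orientation M g" "(a, y) \<in> arcs E g ^^ m"
  shows "out_degree E g a \<le> Suc (out_degree E g y)"
  using assms
proof (induction m arbitrary: g y rule: less_induct)
  case (less m)
  show ?case
  proof (cases m)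
    case 0
    with less.prems show ?thesis by simp
  next
    case (Suc m')
    from less.prems(2) obtain z where az: "(a, z) \<in> arcs E g ^^ m'" and zy: "(z, y) \<in> arcs E g"
      unfolding Suc by (rule relpow_Suc_E)
    have a_z: "out_degree E g a \<le> Suc (out_degree E g z)"
      using less.IH[of m' g z] less.prems(1) az Suc by blast
    have z_y: "out_degree E g z \<le> Suc (out_degree E g y)"
      using optimal_arc_out_degree[OF less.prems(1) zy] .
    consider "out_degree E g z \<le> out_degree E g y" | "a = z" | "a = y"
      | "out_degree E g z = Suc (out_degree E g y)" "a \<noteq> z" "a \<noteq> y"
      using z_y by linarith
    then show ?thesis
    proof cases
      case 4
      define g' where "g' = g({z, y} := y)"
      have opt': "optimal_orientation M g'"
        unfolding g'_def using optimal_reverse_tight_arc[OF less.prems(1) zy 4(1)] .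
      have deg_a: "out_degree E g' a = out_degree E g a"
        unfolding g'_def using out_degree_reverse_arc(3)[OF zy] 4 by simp
      have deg_z: "out_degree E g' z = out_degree E g y"
        unfolding g'_def using out_degree_reverse_arc(1)[OF zy] 4 by simp
      from relpow_Diff_singleton_or_reaches[OF az, of z y] show ?thesis
      proof
        assume "(a, z) \<in> (arcs E g - {(z, y)}) ^^ m'"
        then have "(a, z) \<in> arcs E g' ^^ m'"
          using relpowp_mono[to_set, OF set_mp[OF arcs_reverse_arc[OF zy]]] unfolding g'_def by blast
        then show ?thesis using less.IH[of m' g' z] opt' deg_a deg_z Suc by simp
      next
        assume "\<exists>j\<le>m'. (a, y) \<in> arcs E g ^^ j"
        then obtain j where "j < m" "(a, y) \<in> arcs E g ^^ j" using Suc le_imp_less_Suc by blast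
        then show ?thesis using less.IH less.prems(1) by blast
      qed
    qed (use a_z z_y in auto)
  qed
qed

end

locale peeling_round = finite_simple_graph +
  fixes M :: nat and g :: "'a set \<Rightarrow> 'a"
  assumes optimal: "optimal_orientation M g" and M_pos: "0 < M"
begin

definition quota :: nat where
  "quota = (M + 1) div 2"

definition heavy :: "'a set" where
  "heavy = {v \<in> V. quota \<le> out_degree E g v}"

definition kept :: "'a \<Rightarrow> 'a set set" where
  "kept v = (if v \<in> heavy then SOME T. T \<subseteq> out_edges E g v \<and> card T = quota
             else out_edges E g v)"

definition kept_arcs :: "('a \<times> 'a) set" where
  "kept_arcs = {(u, w). {u, w} \<in> kept u \<and> u \<noteq> w}"

definition core :: "'a set" where
  "core = kept_arcs\<^sup>* `` heavy"

definition core_edges :: "'a set set" where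
  "core_edges = (\<Union>u\<in>core. kept u)"

lemma orientation: "orientation E g"
  using optimal by (simp add: optimal_orientation_def bounded_orientations_def)

lemma out_degree_le: "out_degree E g v \<le> M"
  using optimal by (simp add: optimal_orientation_def bounded_orientations_def)

lemma out_degree_less_quota: "v \<notin> heavy \<Longrightarrow> out_degree E g v < quota"
  using out_degree_outside[OF orientation, of v] M_pos
  by (cases "v \<in> V") (auto simp: heavy_def quota_def)

lemma kept_heavy:
  assumes "v \<in> heavy"
  shows "kept v \<subseteq> out_edges E g v" "card (kept v) = quota"
proof -
  have "quota \<le> card (out_edges E g v)" using assms by (simp add: heavy_def)
  then obtain T where "T \<subseteq> out_edges E g v" "card T = quota"
    by (rule obtain_subset_with_card_n)
  then have "\<exists>T. T \<subseteq> out_edges E g v \<and> card T = quota" by blast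
  from someI_ex[OF this] assms
  show "kept v \<subseteq> out_edges E g v" "card (kept v) = quota" by (simp_all add: kept_def)
qed

lemma kept_subset: "kept v \<subseteq> out_edges E g v"
  using kept_heavy(1) by (cases "v \<in> heavy") (auto simp: kept_def)

lemma card_kept_le: "card (kept v) \<le> quota"
  using kept_heavy(2) out_degree_less_quota
  by (cases "v \<in> heavy") (auto simp: kept_def intro: less_imp_le)

lemma kept_arcs_subset: "kept_arcs \<subseteq> arcs E g"
  using kept_subset by (auto simp: kept_arcs_def arcs_def out_edges_def)

lemma heavy_subset_core: "heavy \<subseteq> core"
  by (auto simp: core_def)

lemma core_subset: "core \<subseteq> V"
proof
  fix v assume "v \<in> core"
  then obtain a where a: "a \<in> heavy" "(a, v) \<in> kept_arcs\<^sup>*" by (auto simp: core_def)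
  from a(2) show "v \<in> V"
  proof (cases rule: rtranclE)
    case base
    with a(1) show ?thesis by (simp add: heavy_def)
  next
    case (step u)
    then have "{u, v} \<in> E" using kept_subset by (auto simp: kept_arcs_def out_edges_def)
    then show ?thesis using edge_subset by auto
  qed
qed

lemma core_edges_subset: "core_edges \<subseteq> E"
  using kept_subset by (auto simp: core_edges_def out_edges_def)

lemma finite_core_edges: "finite core_edges"
  using core_edges_subset finite_edges by (rule finite_subset)

lemma out_edges_core_edges: "out_edges core_edges g v = (if v \<in> core then kept v else {})"
  using kept_subset by (auto simp: core_edges_def out_edges_def)

lemma kept_edge_subset_core:
  assumes "u \<in> core" "e \<in> kept u"
  shows "e \<subseteq> core"
proof -
  have e: "e \<in> E" "g e = u" using assms(2) kept_subset by (auto simp: out_edges_def)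
  then have "u \<in> e" using orientation by (auto simp: orientation_def)
  then obtain w where w: "e = {u, w}" "u \<noteq> w" using edge_doubleton[OF e(1)] by blast
  then have "(u, w) \<in> kept_arcs" using assms(2) by (simp add: kept_arcs_def)
  then have "w \<in> core" using assms(1) by (auto simp: core_def intro: rtrancl_into_rtrancl)
  with assms(1) w(1) show ?thesis by simp
qed

lemma simple_graph_core: "simple_graph core core_edges"
proof -
  have "finite core" using core_subset finite_vertices finite_subset by blast
  moreover have "e \<subseteq> core \<and> card e = 2" if "e \<in> core_edges" for e
  proof
    from that obtain u where "u \<in> core" "e \<in> kept u" by (auto simp: core_edges_def)
    then show "e \<subseteq> core" by (rule kept_edge_subset_core)
    show "card e = 2" using that core_edges_subset graph by (auto simp: simple_graph_def)
  qed
  ultimately show ?thesis by (simp add: simple_graph_def)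
qed

text \<open>
  A non-heavy core vertex is reached by a directed path from a heavy vertex, so it has at least
  \<open>quota - 1\<close> out-edges, all of which it keeps; the last arc of the path adds one more edge.
\<close>

lemma degree_core_edges_ge:
  assumes "v \<in> core"
  shows "quota \<le> degree core_edges v"
proof -
  have fin: "finite {e \<in> core_edges. v \<in> e}"
    using finite_core_edges by simp
  have kept_incident: "kept v \<subseteq> {e \<in> core_edges. v \<in> e}"
  proof
    fix e assume "e \<in> kept v"
    moreover from this have "e \<in> E" "g e = v" using kept_subset by (auto simp: out_edges_def)
    ultimately show "e \<in> {e \<in> core_edges. v \<in> e}"
      using assms orientation by (auto simp: core_edges_def orientation_def)
  qed
  show ?thesis
  proof (cases "v \<in> heavy")
    case True
    then show ?thesis
      using card_mono[OF fin kept_incident] kept_heavy(2) by (simp add: degree_def)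
  next
    case False
    from assms obtain a where a: "a \<in> heavy" "(a, v) \<in> kept_arcs\<^sup>*" by (auto simp: core_def)
    from a(2) obtain u where au: "(a, u) \<in> kept_arcs\<^sup>*" and uv: "(u, v) \<in> kept_arcs"
      by (cases rule: rtranclE) (use a(1) False in auto)
    have "u \<in> core" using a(1) au by (auto simp: core_def)
    have tail: "g {u, v} = u" "u \<noteq> v"
      using uv kept_subset by (auto simp: kept_arcs_def out_edges_def)
    have uv_edge: "{u, v} \<in> core_edges" "{u, v} \<notin> kept v"
      using \<open>u \<in> core\<close> uv tail kept_subset[of v]
      by (auto simp: kept_arcs_def core_edges_def out_edges_def)
    have "card (insert {u, v} (kept v)) \<le> degree core_edges v"
      unfolding degree_def by (rule card_mono[OF fin]) (use uv_edge kept_incident in auto)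
    moreover have "card (insert {u, v} (kept v)) = Suc (out_degree E g v)"
      using uv_edge False finite_out_edges by (simp add: kept_def)
    moreover have "out_degree E g a \<le> Suc (out_degree E g v)"
    proof -
      have "(a, v) \<in> (arcs E g)\<^sup>*" using a(2) kept_arcs_subset rtrancl_mono by blast
      then obtain m where "(a, v) \<in> arcs E g ^^ m" using rtrancl_power by blast
      then show ?thesis by (rule optimal_path_out_degree[OF optimal])
    qed
    moreover have "quota \<le> out_degree E g a" using a(1) by (simp add: heavy_def)
    ultimately show ?thesis by linarith
  qed
qed

lemma card_induced_core_edges_le:
  assumes "finite T"
  shows "card (induced_edges core_edges T) \<le> quota * card T"
proof -
  have "induced_edges core_edges T \<subseteq> (\<Union>v\<in>T. out_edges core_edges g v)"
    using orientation core_edges_subset by (auto simp: induced_edges_def out_edges_def orientation_def)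
  then have "card (induced_edges core_edges T) \<le> card (\<Union>v\<in>T. out_edges core_edges g v)"
    using assms finite_core_edges by (intro card_mono) (simp_all add: out_edges_def)
  also have "\<dots> \<le> (\<Sum>v\<in>T. out_degree core_edges g v)" by (rule card_UN_le[OF assms])
  also have "\<dots> \<le> (\<Sum>v\<in>T. quota)"
    using card_kept_le by (intro sum_mono) (simp add: out_edges_core_edges)
  finally show ?thesis by (simp add: mult.commute)
qed

lemma uniformly_dense_core: "uniformly_dense 2 core core_edges"
proof (rule uniformly_dense_2I[OF simple_graph_core])
  show "\<And>v. v \<in> core \<Longrightarrow> quota \<le> degree core_edges v" by (rule degree_core_edges_ge)
  show "\<And>T. T \<subseteq> core \<Longrightarrow> card (induced_edges core_edges T) \<le> quota * card T"
    using card_induced_core_edges_le core_subset finite_vertices by (meson finite_subset)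
qed

lemma out_degree_remainder: "out_degree (E - core_edges) g v \<le> M div 2"
proof -
  have split: "out_edges (E - core_edges) g v = out_edges E g v - out_edges core_edges g v"
    by (auto simp: out_edges_def)
  show ?thesis
  proof (cases "v \<in> heavy")
    case True
    then have "out_degree (E - core_edges) g v = card (out_edges E g v - kept v)"
      using split heavy_subset_core by (auto simp: out_edges_core_edges)
    also have "\<dots> = out_degree E g v - quota"
      using kept_heavy[OF True] finite_out_edges by (simp add: card_Diff_subset finite_subset)
    finally show ?thesis using out_degree_le[of v] by (simp add: quota_def)
  next
    case False
    have "out_degree (E - core_edges) g v \<le> out_degree E g v"
      using split finite_out_edges by (simp add: card_mono)
    then show ?thesis using out_degree_less_quota[OF False] by (simp add: quota_def)
  qed
qed

end

definition dense_decomposition ::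
    "'a set \<Rightarrow> 'a set set \<Rightarrow> nat \<Rightarrow> (nat \<Rightarrow> 'a set) \<Rightarrow> (nat \<Rightarrow> 'a set set) \<Rightarrow> bool" where
  "dense_decomposition V E l U F \<longleftrightarrow>
     (\<forall>i<l. U i \<subseteq> V \<and> F i \<subseteq> E \<and> simple_graph (U i) (F i)) \<and>
     (\<forall>i<l. \<forall>j<l. i \<noteq> j \<longrightarrow> F i \<inter> F j = {}) \<and>
     (\<Union>i<l. F i) = E \<and>
     (\<forall>i<l. uniformly_dense 2 (U i) (F i))"

lemma dense_decomposition_empty: "dense_decomposition V {} 0 U F"
  by (simp add: dense_decomposition_def)

lemma dense_decomposition_extend:
  assumes D: "dense_decomposition V (E - P) l U F"
    and P: "X \<subseteq> V" "P \<subseteq> E" "simple_graph X P" "uniformly_dense 2 X P"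
  shows "dense_decomposition V E (Suc l) (U(l := X)) (F(l := P))"
proof -
  have parts: "\<forall>i<l. U i \<subseteq> V \<and> F i \<subseteq> E - P \<and> simple_graph (U i) (F i)"
    and disjoint: "\<forall>i<l. \<forall>j<l. i \<noteq> j \<longrightarrow> F i \<inter> F j = {}"
    and cover: "(\<Union>i<l. F i) = E - P"
    and dense: "\<forall>i<l. uniformly_dense 2 (U i) (F i)"
    using D by (simp_all add: dense_decomposition_def)
  have "(\<Union>i<Suc l. (F(l := P)) i) = P \<union> (\<Union>i<l. F i)"
    by (auto simp: lessThan_Suc)
  with cover P(2) have "(\<Union>i<Suc l. (F(l := P)) i) = E" by auto
  moreover have "(F(l := P)) i \<inter> (F(l := P)) j = {}" if "i < Suc l" "j < Suc l" "i \<noteq> j" for i j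
    using that parts disjoint[rule_format, of i j] by (auto simp: less_Suc_eq)
  ultimately show ?thesis
    using parts dense P by (auto simp: dense_decomposition_def less_Suc_eq)
qed

context finite_simple_graph
begin

lemma dense_subgraph_halving:
  assumes "optimal_orientation M g" "0 < M"
  obtains X P where "X \<subseteq> V" "P \<subseteq> E" "simple_graph X P" "uniformly_dense 2 X P"
    and "\<forall>v. out_degree (E - P) g v \<le> M div 2"
proof -
  interpret peeling_round V E M g
    using assms by unfold_locales
  show ?thesis
    using that core_subset core_edges_subset simple_graph_core uniformly_dense_core
      out_degree_remainder by blast
qed

end

lemma dense_decomposition_of_orientation:
  assumes "simple_graph V E" "orientation E g" "\<forall>v. out_degree E g v \<le> M"
  shows "\<exists>l U F. (l = 0 \<or> 2 ^ l \<le> 2 * M) \<and> dense_decomposition V E l U F"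
  using assms
proof (induction M arbitrary: E g rule: less_induct)
  case (less M)
  interpret finite_simple_graph V E using less.prems(1) by (rule finite_simple_graph.intro)
  show ?case
  proof (cases "E = {}")
    case True
    then show ?thesis using dense_decomposition_empty by blast
  next
    case False
    then obtain e where "e \<in> E" by blast
    then have "out_edges E g (g e) \<noteq> {}" by (auto simp: out_edges_def)
    then have "0 < out_degree E g (g e)" using finite_out_edges by (simp add: card_gt_0_iff)
    then have M_pos: "0 < M" using less.prems(3) by (meson less_le_trans)
    have "g \<in> bounded_orientations M"
      using less.prems(2,3) by (simp add: bounded_orientations_def)
    then obtain g' where opt: "optimal_orientation M g'" by (rule optimal_orientation_exists)
    then obtain X P where P: "X \<subseteq> V" "P \<subseteq> E" "simple_graph X P" "uniformly_dense 2 X P"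
      and rest: "\<forall>v. out_degree (E - P) g' v \<le> M div 2"
      using M_pos by (rule dense_subgraph_halving)
    have "orientation (E - P) g'"
      using opt by (auto simp: optimal_orientation_def bounded_orientations_def orientation_def)
    then have "\<exists>l U F. (l = 0 \<or> 2 ^ l \<le> 2 * (M div 2)) \<and> dense_decomposition V (E - P) l U F"
      using M_pos rest by (intro less.IH simple_graph_Diff[OF graph]) simp_all
    then obtain l U F where l: "l = 0 \<or> 2 ^ l \<le> 2 * (M div 2)"
      and D: "dense_decomposition V (E - P) l U F" by blast
    have "2 ^ Suc l \<le> 2 * M"
    proof (cases "l = 0")
      case True
      with M_pos show ?thesis by simp
    next
      case False
      with l have "2 ^ l \<le> M" by linarith
      then show ?thesis by simp
    qed
    with dense_decomposition_extend[OF D P] show ?thesis by blast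
  qed
qed

lemma dense_decomposition_exists:
  assumes "simple_graph V E"
  shows "\<exists>l U F. (l = 0 \<or> 2 ^ l \<le> card V ^ 2) \<and> dense_decomposition V E l U F"
proof -
  define g where "g e = (SOME v. v \<in> e)" for e :: "'a set"
  have "orientation E g"
    unfolding orientation_def
  proof
    fix e assume "e \<in> E"
    then have "e \<noteq> {}" using assms by (auto simp: simple_graph_def)
    then show "g e \<in> e" by (simp add: g_def some_in_eq)
  qed
  moreover have "\<forall>v. out_degree E g v \<le> card E"
    using simple_graph_finite_edges[OF assms] by (simp add: out_edges_def card_mono)
  ultimately have "\<exists>l U F. (l = 0 \<or> 2 ^ l \<le> 2 * card E) \<and> dense_decomposition V E l U F"
    by (rule dense_decomposition_of_orientation[OF assms])
  then obtain l U F where l: "l = 0 \<or> 2 ^ l \<le> 2 * card E"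
    and D: "dense_decomposition V E l U F" by blast
  have "l = 0 \<or> 2 ^ l \<le> card V ^ 2"
    using l simple_graph_card_edges_le[OF assms] le_trans by blast
  with D show ?thesis by blast
qed

lemma exponent_le_of_pow2_le_square:
  assumes "2 \<le> n" "l = 0 \<or> 2 ^ l \<le> n ^ 2"
  shows "real l \<le> 2 / ln 2 * ln (real n)"
proof (cases "l = 0")
  case True
  then show ?thesis using assms(1) by simp
next
  case False
  with assms(2) have "2 ^ l \<le> n ^ 2" by simp
  then have "(2::real) ^ l \<le> real n ^ 2"
    by (metis of_nat_le_iff of_nat_numeral of_nat_power)
  then have "ln ((2::real) ^ l) \<le> ln (real n ^ 2)"
    using assms(1) by (subst ln_le_cancel_iff) auto
  then have "real l * ln 2 \<le> 2 * ln (real n)"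
    using assms(1) by (simp add: ln_realpow)
  then show ?thesis by (simp add: field_simps)
qed

theorem mainTheorem6:
  "\<exists>C::real. C > 0 \<and>
     (\<forall>(V::nat set) (E::nat set set). simple_graph V E \<and> card V \<ge> 2 \<longrightarrow>
        (\<exists>(l::nat) (U::nat \<Rightarrow> nat set) (F::nat \<Rightarrow> nat set set).
           (\<forall>i<l. U i \<subseteq> V \<and> F i \<subseteq> E \<and> simple_graph (U i) (F i)) \<and>
           (\<forall>i<l. \<forall>j<l. i \<noteq> j \<longrightarrow> F i \<inter> F j = {}) \<and>
           (\<Union>i<l. F i) = E \<and>
           (\<forall>v\<in>V. real (card {i. i < l \<and> v \<in> U i}) \<le> C * ln (real (card V))) \<and>
           (\<forall>i<l. uniformly_dense 2 (U i) (F i))))"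
proof (intro exI[of _ "2 / ln 2"] conjI allI impI)
  show "0 < 2 / ln (2::real)" by simp
  fix V :: "nat set" and E :: "nat set set"
  assume G: "simple_graph V E \<and> 2 \<le> card V"
  obtain l U F where l: "l = 0 \<or> 2 ^ l \<le> card V ^ 2"
    and D: "dense_decomposition V E l U F"
    using dense_decomposition_exists[OF conjunct1[OF G]] by blast
  have bound: "\<forall>v\<in>V. real (card {i. i < l \<and> v \<in> U i}) \<le> 2 / ln 2 * ln (real (card V))"
  proof
    fix v
    have "card {i. i < l \<and> v \<in> U i} \<le> card {..<l}" by (intro card_mono) auto
    then show "real (card {i. i < l \<and> v \<in> U i}) \<le> 2 / ln 2 * ln (real (card V))"
      using exponent_le_of_pow2_le_square[OF conjunct2[OF G] l] by simp
  qed
  show "\<exists>(l::nat) U F. (\<forall>i<l. U i \<subseteq> V \<and> F i \<subseteq> E \<and> simple_graph (U i) (F i)) \<and>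
      (\<forall>i<l. \<forall>j<l. i \<noteq> j \<longrightarrow> F i \<inter> F j = {}) \<and> (\<Union>i<l. F i) = E \<and>
      (\<forall>v\<in>V. real (card {i. i < l \<and> v \<in> U i}) \<le> 2 / ln 2 * ln (real (card V))) \<and>
      (\<forall>i<l. uniformly_dense 2 (U i) (F i))"
    using D bound unfolding dense_decomposition_def by blast
qed

end
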